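(* Let $(\Omega,\mathbb{P})$ be a probability space and let $T\colon\Omega\to\Omega$ be an ergodic measure-preserving transformation. Let $m\ge 1$ be an integer and let $f_1,\dots,f_m\in L^1(\mathbb{P})$ be real-valued. For each integer $n\ge m$ and each $\omega\in\Omega$, let $A(n,\omega)$ be the $m\times n$ real matrix whose $(i,j)$ entry is $f_i(T^{j-1}\omega)$, for $1\le i\le m$, $1\le j\le n$. Then for $\mathbb{P}$-almost every $\omega\in\Omega$, $$\lim_{n\to\infty}\frac{1}{n^{\downarrow m}}\operatorname{per}A(n,\omega)=\prod_{i=1}^m\int f_i\,\mathrm{d}\mathbb{P}.$$
   Context: For an $m\times n$ real matrix $A=(a_{i,j})$ with $m\le n$, its permanent is $\operatorname{per}A=\sum_{\tau}a_{1,\tau(1)}\cdots a_{m,\tau(m)}$, where the sum ranges over all one-to-one functions $\tau\colon\{1,\dots,m\}\to\{1,\dots,n\}$. The falling power is $n^{\downarrow m}=n(n-1)\cdots(n-m+1)$, the number of such functions. *)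

theory Defs
  imports "HOL-Probability.Probability"
begin

definition measure_preserving :: "'a measure \<Rightarrow> ('a \<Rightarrow> 'a) \<Rightarrow> bool" where
  "measure_preserving M T \<longleftrightarrow> T \<in> M \<rightarrow>\<^sub>M M \<and> distr M M T = M"

definition ergodic :: "'a measure \<Rightarrow> ('a \<Rightarrow> 'a) \<Rightarrow> bool" where
  "ergodic M T \<longleftrightarrow> measure_preserving M T \<and>
     (\<forall>A \<in> sets M. T -` A \<inter> space M = A \<longrightarrow> measure M A = 0 \<or> measure M A = 1)"

definition falling_pow :: "nat \<Rightarrow> nat \<Rightarrow> nat" where
  "falling_pow n m = (\<Prod>k<m. n - k)"

definition per :: "nat \<Rightarrow> nat \<Rightarrow> (nat \<Rightarrow> nat \<Rightarrow> real) \<Rightarrow> real" where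
  "per m n A = (\<Sum>\<tau> \<in> {\<tau>. \<tau> \<in> {..<m} \<rightarrow>\<^sub>E {..<n} \<and> inj_on \<tau> {..<m}}. \<Prod>i<m. A i (\<tau> i))"

end

theory Submission
  imports Defs
begin

text \<open>
  Write \<open>a\<^sub>i(j) = f\<^sub>i(T\<^sup>j \<omega>)\<close>. Expanding the permanent along its last row, the permanent of the
  first \<open>m + 1\<close> rows equals the permanent of the first \<open>m\<close> rows times \<open>\<Sum>j<n. a\<^sub>m(j)\<close>, up to the
  terms in which the last row reuses one of the \<open>m\<close> columns already taken; these are bounded by
  \<open>m \<cdot> (MAX j<n. |a\<^sub>m(j)|) \<cdot> (\<Prod>i<m. \<Sum>j<n. |a\<^sub>i(j)|)\<close>. By Birkhoff's ergodic theorem applied to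
  \<open>f\<^sub>i\<close> and \<open>|f\<^sub>i|\<close>, the row sums are \<open>n \<integral>f\<^sub>i + o(n)\<close> and \<open>O(n)\<close>, so single entries, and hence
  their running maxima, are \<open>o(n)\<close>. Induction on \<open>m\<close> gives \<open>per A(n,\<omega>) = n\<^sup>m \<Prod>i. \<integral>f\<^sub>i + o(n\<^sup>m)\<close>,
  and \<open>n\<^sup>m\<close> is asymptotic to the falling power.

  Birkhoff's theorem is proved from the maximal ergodic inequality (Garsia's argument): if
  \<open>\<integral>h < 0\<close>, the \<open>T\<close>-invariant set \<open>B\<close> on which the Birkhoff sums of \<open>h\<close> are unbounded above
  satisfies \<open>\<integral>\<^sub>B h \<ge> 0\<close>, so by ergodicity it is null. Applied to \<open>g - c\<close> and \<open>c - g\<close> for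
  constants \<open>c\<close> close to \<open>\<integral>g\<close>, this pins down the averages of the Birkhoff sums of \<open>g\<close>.
\<close>

lemma measure_preservingD:
  assumes "measure_preserving M T"
  shows "T \<in> M \<rightarrow>\<^sub>M M" and "distr M M T = M"
  using assms unfolding measure_preserving_def by auto

lemma
  fixes u :: "'a \<Rightarrow> real"
  assumes T: "measure_preserving M T" and u: "integrable M u"
  shows integrable_comp_measure_preserving: "integrable M (\<lambda>x. u (T x))"
    and integral_comp_measure_preserving: "(\<integral>x. u (T x) \<partial>M) = integral\<^sup>L M u"
proof -
  have u_meas: "u \<in> borel_measurable M"
    using u by blast
  show "integrable M (\<lambda>x. u (T x))"
    using integrable_distr_eq[OF measure_preservingD(1)[OF T] u_meas] measure_preservingD(2)[OF T] u
    by simp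
  show "(\<integral>x. u (T x) \<partial>M) = integral\<^sup>L M u"
    using integral_distr[OF measure_preservingD(1)[OF T] u_meas] measure_preservingD(2)[OF T]
    by simp
qed

lemma integrable_comp_funpow_measure_preserving:
  fixes u :: "'a \<Rightarrow> real"
  assumes T: "measure_preserving M T" and u: "integrable M u"
  shows "integrable M (\<lambda>x. u ((T ^^ j) x))"
proof (induction j)
  case 0
  then show ?case using u by simp
next
  case (Suc j)
  from integrable_comp_measure_preserving[OF T this] show ?case
    by (simp add: funpow_swap1)
qed

lemma funpow_mem_invariant_iff:
  assumes T: "T \<in> M \<rightarrow>\<^sub>M M" and B: "T -` B \<inter> space M = B" and x: "x \<in> space M"
  shows "(T ^^ j) x \<in> B \<longleftrightarrow> x \<in> B"
proof (induction j)
  case (Suc j)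
  have "(T ^^ j) x \<in> space M"
    using measurable_space[OF measurable_compose_n[OF T] x] .
  then have "T ((T ^^ j) x) \<in> B \<longleftrightarrow> (T ^^ j) x \<in> B"
    by (subst (2) B[symmetric]) blast
  then show ?case using Suc by simp
qed simp

definition birkhoff_sum :: "('a \<Rightarrow> 'a) \<Rightarrow> ('a \<Rightarrow> real) \<Rightarrow> nat \<Rightarrow> 'a \<Rightarrow> real" where
  "birkhoff_sum T h k x = (\<Sum>j<k. h ((T ^^ j) x))"

lemma birkhoff_sum_0 [simp]: "birkhoff_sum T h 0 x = 0"
  by (simp add: birkhoff_sum_def)

lemma birkhoff_sum_Suc: "birkhoff_sum T h (Suc k) x = h x + birkhoff_sum T h k (T x)"
  unfolding birkhoff_sum_def sum.lessThan_Suc_shift funpow_Suc_right by simp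

lemma birkhoff_sum_diff_const: "birkhoff_sum T (\<lambda>y. h y - c) k x = birkhoff_sum T h k x - real k * c"
  by (simp add: birkhoff_sum_def sum_subtractf)

lemma birkhoff_sum_uminus: "birkhoff_sum T (\<lambda>y. - h y) k x = - birkhoff_sum T h k x"
  by (simp add: birkhoff_sum_def sum_negf)

lemma birkhoff_sum_indicator_invariant:
  assumes "T \<in> M \<rightarrow>\<^sub>M M" "T -` B \<inter> space M = B" "x \<in> space M"
  shows "birkhoff_sum T (\<lambda>y. indicator B y * h y) k x = indicator B x * birkhoff_sum T h k x"
  unfolding birkhoff_sum_def sum_distrib_left
  by (intro sum.cong refl) (simp add: indicator_def funpow_mem_invariant_iff[OF assms])

lemma birkhoff_sum_measurable:
  assumes "T \<in> M \<rightarrow>\<^sub>M M" "h \<in> borel_measurable M"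
  shows "birkhoff_sum T h k \<in> borel_measurable M"
  unfolding birkhoff_sum_def[abs_def] using assms by measurable

lemma integrable_birkhoff_sum:
  assumes "measure_preserving M T" "integrable M h"
  shows "integrable M (birkhoff_sum T h k)"
  unfolding birkhoff_sum_def[abs_def]
  using integrable_comp_funpow_measure_preserving[OF assms] by simp

lemma bdd_above_image_plus_iff:
  fixes A :: "'a::ordered_ab_group_add set"
  shows "bdd_above ((+) c ` A) \<longleftrightarrow> bdd_above A"
proof
  assume "bdd_above ((+) c ` A)"
  from bdd_above_image_mono[OF mono_add this, of "- c"] show "bdd_above A"
    by (simp add: image_image)
qed (rule bdd_above_image_mono[OF mono_add])

lemma bdd_above_birkhoff_sum_comp_iff:
  "bdd_above (range (\<lambda>k. birkhoff_sum T h k (T x))) \<longleftrightarrow> bdd_above (range (\<lambda>k. birkhoff_sum T h k x))"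
proof -
  have "range (\<lambda>k. birkhoff_sum T h k x) = insert 0 ((+) (h x) ` range (\<lambda>k. birkhoff_sum T h k (T x)))"
    by (subst UNIV_nat_eq) (simp add: image_image birkhoff_sum_Suc)
  then show ?thesis
    by (simp add: bdd_above_image_plus_iff)
qed

fun birkhoff_max :: "('a \<Rightarrow> 'a) \<Rightarrow> ('a \<Rightarrow> real) \<Rightarrow> nat \<Rightarrow> 'a \<Rightarrow> real" where
  "birkhoff_max T h 0 x = 0"
| "birkhoff_max T h (Suc N) x = max (birkhoff_max T h N x) (birkhoff_sum T h (Suc N) x)"

lemma birkhoff_sum_le_birkhoff_max: "k \<le> N \<Longrightarrow> birkhoff_sum T h k x \<le> birkhoff_max T h N x"
  by (induction N) (auto simp: le_Suc_eq)

lemma birkhoff_max_nonneg: "0 \<le> birkhoff_max T h N x"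
  using birkhoff_sum_le_birkhoff_max[of 0 N T h x] by simp

lemma birkhoff_max_attained: "\<exists>k\<le>N. birkhoff_max T h N x = birkhoff_sum T h k x"
  by (induction N) (auto simp: max_def le_Suc_eq)

lemma birkhoff_max_pos_iff: "0 < birkhoff_max T h N x \<longleftrightarrow> (\<exists>k\<le>N. 0 < birkhoff_sum T h k x)"
  using birkhoff_max_attained[of N T h x] birkhoff_sum_le_birkhoff_max[of _ N T h x] by force

lemma integrable_birkhoff_max:
  assumes "measure_preserving M T" "integrable M h"
  shows "integrable M (birkhoff_max T h N)"
proof (induction N)
  case (Suc N)
  have eq: "birkhoff_max T h (Suc N) = (\<lambda>x. max (birkhoff_max T h N x) (birkhoff_sum T h (Suc N) x))"
    by (simp add: fun_eq_iff)
  show ?case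
    unfolding eq by (rule integrable_max[OF Suc integrable_birkhoff_sum[OF assms]])
qed (simp add: birkhoff_max.simps(1)[abs_def])

text \<open>The heart of Garsia's proof: where the running maximum is positive it is attained at some
  \<open>k \<ge> 1\<close>, and peeling off the first term bounds it by \<open>h x\<close> plus the running maximum at \<open>T x\<close>.\<close>
lemma birkhoff_max_diff_comp_le:
  "birkhoff_max T h N x - birkhoff_max T h N (T x) \<le> indicator {y. 0 < birkhoff_max T h N y} x * h x"
proof (cases "0 < birkhoff_max T h N x")
  case True
  obtain k where k: "k \<le> N" "birkhoff_max T h N x = birkhoff_sum T h k x"
    using birkhoff_max_attained[of N T h x] by blast
  with True have "k \<noteq> 0"
    by (metis birkhoff_sum_0 less_irrefl)
  then obtain k' where k': "k = Suc k'"
    using not0_implies_Suc by blast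
  have "birkhoff_sum T h k' (T x) \<le> birkhoff_max T h N (T x)"
    using k k' by (intro birkhoff_sum_le_birkhoff_max) auto
  moreover have "birkhoff_max T h N x = h x + birkhoff_sum T h k' (T x)"
    unfolding k(2) k' by (rule birkhoff_sum_Suc)
  ultimately show ?thesis
    using True by simp
next
  case False
  then show ?thesis
    using birkhoff_max_nonneg[of T h N x] birkhoff_max_nonneg[of T h N "T x"] by simp
qed

lemma maximal_ergodic_inequality_finite:
  assumes T: "measure_preserving M T" and h: "integrable M h"
  shows "0 \<le> (\<integral>x. indicator {x\<in>space M. 0 < birkhoff_max T h N x} x * h x \<partial>M)"
proof -
  let ?F = "birkhoff_max T h N"
  have F: "integrable M ?F"
    using integrable_birkhoff_max[OF T h] .
  then have F_comp: "integrable M (\<lambda>x. ?F (T x))"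
    by (rule integrable_comp_measure_preserving[OF T])
  have "{x\<in>space M. 0 < ?F x} \<in> sets M"
    using F by measurable
  from integrable_mult_indicator[OF this h]
  have ind: "integrable M (\<lambda>x. indicator {x\<in>space M. 0 < ?F x} x * h x)"
    by simp
  have "0 = (\<integral>x. ?F x - ?F (T x) \<partial>M)"
    using integral_comp_measure_preserving[OF T F] by (simp add: F F_comp)
  also have "\<dots> \<le> (\<integral>x. indicator {x\<in>space M. 0 < ?F x} x * h x \<partial>M)"
  proof (intro integral_mono)
    fix x assume "x \<in> space M"
    then show "?F x - ?F (T x) \<le> indicator {x\<in>space M. 0 < ?F x} x * h x"
      using birkhoff_max_diff_comp_le[of T h N x] by (simp add: indicator_def)
  qed (use F F_comp ind in auto)
  finally show ?thesis .
qed

theorem maximal_ergodic_inequality: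
  assumes T: "measure_preserving M T" and h: "integrable M h"
  shows "0 \<le> (\<integral>x. indicator {x\<in>space M. \<exists>k. 0 < birkhoff_sum T h k x} x * h x \<partial>M)"
proof -
  have [measurable]: "birkhoff_sum T h k \<in> borel_measurable M" for k
    using measure_preservingD(1)[OF T] h by (intro birkhoff_sum_measurable) auto
  define A where "A N = {x\<in>space M. \<exists>k\<le>N. 0 < birkhoff_sum T h k x}" for N
  define E where "E = {x\<in>space M. \<exists>k. 0 < birkhoff_sum T h k x}"
  have A_eq: "A N = {x\<in>space M. 0 < birkhoff_max T h N x}" for N
    by (simp add: A_def birkhoff_max_pos_iff)
  have "incseq A"
    by (rule incseq_SucI) (auto simp: A_def le_Suc_eq)
  moreover have "(\<Union>N. A N) = E"
    by (auto simp: A_def E_def)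
  ultimately have pointwise: "(\<lambda>N. indicator (A N) x * h x) \<longlonglongrightarrow> indicator E x * h x" for x
    using LIMSEQ_indicator_incseq[of A x] by (intro tendsto_mult_right) simp
  have "(\<lambda>N. \<integral>x. indicator (A N) x * h x \<partial>M) \<longlonglongrightarrow> (\<integral>x. indicator E x * h x \<partial>M)"
  proof (rule integral_dominated_convergence[where w="\<lambda>x. norm (h x)"])
    show "AE x in M. norm (indicator (A N) x * h x) \<le> norm (h x)" for N
      by (simp add: indicator_def)
    show "(\<lambda>x. indicator E x * h x) \<in> borel_measurable M"
      unfolding E_def using h by measurable
    show "(\<lambda>x. indicator (A N) x * h x) \<in> borel_measurable M" for N
      unfolding A_def using h by measurable
    show "integrable M (\<lambda>x. norm (h x))"
      using h by (rule integrable_norm)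
    show "AE x in M. (\<lambda>N. indicator (A N) x * h x) \<longlonglongrightarrow> indicator E x * h x"
      using pointwise by simp
  qed
  then show ?thesis
    using maximal_ergodic_inequality_finite[OF T h] unfolding E_def A_eq
    by (intro LIMSEQ_le_const) auto
qed

lemma integral_indicator_nonneg_if_birkhoff_sum_pos:
  assumes T: "measure_preserving M T" and h: "integrable M h"
    and B: "B \<in> sets M" "T -` B \<inter> space M = B"
    and pos: "\<And>x. x \<in> B \<Longrightarrow> \<exists>k. 0 < birkhoff_sum T h k x"
  shows "0 \<le> (\<integral>x. indicator B x * h x \<partial>M)"
proof -
  let ?hB = "\<lambda>x. indicator B x * h x"
  have T_meas: "T \<in> M \<rightarrow>\<^sub>M M"
    using T by (rule measure_preservingD)
  have "integrable M ?hB"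
    using integrable_mult_indicator[OF B(1) h] by simp
  from maximal_ergodic_inequality[OF T this]
  have "0 \<le> (\<integral>x. indicator {x\<in>space M. \<exists>k. 0 < birkhoff_sum T ?hB k x} x * ?hB x \<partial>M)" .
  also have "{x\<in>space M. \<exists>k. 0 < birkhoff_sum T ?hB k x} = B"
  proof -
    have "(\<exists>k. 0 < birkhoff_sum T ?hB k x) \<longleftrightarrow> x \<in> B" if "x \<in> space M" for x
      unfolding birkhoff_sum_indicator_invariant[OF T_meas B(2) that] using pos by (auto simp: indicator_def)
    then show ?thesis
      using sets.sets_into_space[OF B(1)] by blast
  qed
  also have "(\<integral>x. indicator B x * ?hB x \<partial>M) = (\<integral>x. ?hB x \<partial>M)"
    by (rule Bochner_Integration.integral_cong) (auto simp: indicator_def)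
  finally show ?thesis .
qed

lemma bdd_above_range_iff_nat_bound:
  fixes a :: "nat \<Rightarrow> real"
  shows "bdd_above (range a) \<longleftrightarrow> (\<exists>r::nat. \<forall>k. a k \<le> real r)"
proof
  assume "bdd_above (range a)"
  then obtain c where "\<forall>k. a k \<le> c"
    by (auto simp: bdd_above_def)
  moreover obtain r :: nat where "c \<le> real r"
    using real_arch_simple by blast
  ultimately show "\<exists>r::nat. \<forall>k. a k \<le> real r"
    by (meson order_trans)
qed (auto intro: bdd_aboveI2)

lemma birkhoff_sum_bdd_above_AE:
  assumes "prob_space M" and erg: "ergodic M T" and h: "integrable M h" and neg: "integral\<^sup>L M h < 0"
  shows "AE x in M. bdd_above (range (\<lambda>k. birkhoff_sum T h k x))"
proof -
  interpret prob_space M by fact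
  have T: "measure_preserving M T"
    using erg by (simp add: ergodic_def)
  have T_meas: "T \<in> M \<rightarrow>\<^sub>M M"
    using T by (rule measure_preservingD)
  have [measurable]: "birkhoff_sum T h k \<in> borel_measurable M" for k
    using T_meas h by (intro birkhoff_sum_measurable) auto
  define B where "B = {x\<in>space M. \<not> bdd_above (range (\<lambda>k. birkhoff_sum T h k x))}"
  have B_sets: "B \<in> sets M"
    unfolding B_def bdd_above_range_iff_nat_bound by measurable
  have B_inv: "T -` B \<inter> space M = B"
    using measurable_space[OF T_meas] by (auto simp: B_def bdd_above_birkhoff_sum_comp_iff)
  have "\<exists>k. 0 < birkhoff_sum T h k x" if "x \<in> B" for x
    using that by (auto simp: B_def bdd_above_def not_le)
  then have "0 \<le> (\<integral>x. indicator B x * h x \<partial>M)"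
    by (rule integral_indicator_nonneg_if_birkhoff_sum_pos[OF T h B_sets B_inv])
  moreover have "(\<integral>x. indicator B x * h x \<partial>M) = integral\<^sup>L M h" if "measure M B = 1"
  proof (rule integral_cong_AE)
    have "AE x in M. x \<in> B"
      using prob_eq_1[OF B_sets] that by simp
    then show "AE x in M. indicator B x * h x = h x"
      by eventually_elim simp
  qed (use B_sets h in auto)
  ultimately have "measure M B \<noteq> 1"
    using neg by auto
  then have "measure M B = 0"
    using erg B_sets B_inv by (auto simp: ergodic_def)
  then have "AE x in M. x \<notin> B"
    using prob_eq_0[OF B_sets] by simp
  with AE_space show ?thesis
    by eventually_elim (auto simp: B_def)
qed

lemma birkhoff_sum_le_linear_AE:
  assumes P: "prob_space M" and erg: "ergodic M T" and g: "integrable M g" and c: "integral\<^sup>L M g < c"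
  shows "AE x in M. \<exists>r. \<forall>k. birkhoff_sum T g k x \<le> real k * c + r"
proof -
  interpret prob_space M by fact
  have "integrable M (\<lambda>x. g x - c)"
    using g by simp
  moreover have "(\<integral>x. g x - c \<partial>M) < 0"
    using c g by (simp add: prob_space)
  ultimately have "AE x in M. bdd_above (range (\<lambda>k. birkhoff_sum T (\<lambda>y. g y - c) k x))"
    by (rule birkhoff_sum_bdd_above_AE[OF P erg])
  then show ?thesis
  proof eventually_elim
    case (elim x)
    then obtain r where "\<forall>k. birkhoff_sum T g k x - real k * c \<le> r"
      by (auto simp: bdd_above_def birkhoff_sum_diff_const)
    then show ?case
      by (auto simp: algebra_simps)
  qed
qed

lemma birkhoff_sum_error_bound_AE:
  assumes P: "prob_space M" and erg: "ergodic M T" and g: "integrable M g" and e: "0 < e"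
  shows "AE x in M. \<exists>r. \<forall>k. \<bar>birkhoff_sum T g k x - real k * integral\<^sup>L M g\<bar> \<le> real k * e + r"
proof -
  let ?I = "integral\<^sup>L M g"
  have "AE x in M. \<exists>r. \<forall>k. birkhoff_sum T g k x \<le> real k * (?I + e) + r"
    using e by (intro birkhoff_sum_le_linear_AE[OF P erg g]) simp
  moreover have "AE x in M. \<exists>r. \<forall>k. - birkhoff_sum T g k x \<le> real k * (- ?I + e) + r"
    using birkhoff_sum_le_linear_AE[OF P erg integrable_minus[OF g], of "- ?I + e"] e
    by (simp add: birkhoff_sum_uminus)
  ultimately show ?thesis
  proof eventually_elim
    case (elim x)
    then obtain r1 r2 where
      r1: "\<forall>k. birkhoff_sum T g k x \<le> real k * (?I + e) + r1" and
      r2: "\<forall>k. - birkhoff_sum T g k x \<le> real k * (- ?I + e) + r2"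
      by blast
    have "\<bar>birkhoff_sum T g k x - real k * ?I\<bar> \<le> real k * e + max r1 r2" for k
      using r1[rule_format, of k] r2[rule_format, of k] max.cobounded1[of r1 r2] max.cobounded2[of r1 r2]
      by (simp add: algebra_simps abs_le_iff) linarith
    then show ?case
      by blast
  qed
qed

lemma average_tendsto_of_linear_error_bounds:
  fixes S :: "nat \<Rightarrow> real"
  assumes bounds: "\<And>e. 0 < e \<Longrightarrow> \<exists>r. \<forall>k. \<bar>S k - real k * I\<bar> \<le> real k * e + r"
  shows "(\<lambda>n. S n / real n) \<longlonglongrightarrow> I"
proof (rule LIMSEQ_I)
  fix e :: real
  assume e: "0 < e"
  then obtain r where r: "\<forall>k. \<bar>S k - real k * I\<bar> \<le> real k * (e / 2) + r"
    using bounds[of "e / 2"] by auto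
  obtain N where N: "2 * r / e < real N"
    using reals_Archimedean2 by blast
  have "norm (S n / real n - I) < e" if n: "Suc N \<le> n" for n
  proof -
    have n_pos: "0 < real n"
      using n by simp
    have "2 * r < e * real N"
      using N e by (simp add: field_simps)
    also have "\<dots> \<le> e * real n"
      using n e by (intro mult_left_mono) auto
    finally have "r / real n < e / 2"
      using n_pos by (simp add: field_simps)
    have "norm (S n / real n - I) = \<bar>S n - real n * I\<bar> / real n"
      using n_pos by (simp add: field_simps abs_divide)
    also have "\<dots> \<le> (real n * (e / 2) + r) / real n"
      using r n_pos by (intro divide_right_mono) auto
    also have "\<dots> = e / 2 + r / real n"
      using n_pos by (simp add: field_simps)
    also have "\<dots> < e"
      using \<open>r / real n < e / 2\<close> by linarith
    finally show ?thesis .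
  qed
  then show "\<exists>N. \<forall>n\<ge>N. norm (S n / real n - I) < e"
    by blast
qed

theorem birkhoff_ergodic_theorem:
  assumes P: "prob_space M" and erg: "ergodic M T" and g: "integrable M g"
  shows "AE x in M. (\<lambda>n. birkhoff_sum T g n x / real n) \<longlonglongrightarrow> integral\<^sup>L M g"
proof -
  let ?I = "integral\<^sup>L M g"
  have "AE x in M. \<forall>j. \<exists>r. \<forall>k. \<bar>birkhoff_sum T g k x - real k * ?I\<bar> \<le> real k * inverse (real (Suc j)) + r"
    unfolding AE_all_countable by (intro allI birkhoff_sum_error_bound_AE[OF P erg g]) simp
  then show ?thesis
  proof eventually_elim
    case (elim x)
    show ?case
    proof (rule average_tendsto_of_linear_error_bounds)
      fix e :: real
      assume "0 < e"
      then obtain j where j: "inverse (real (Suc j)) < e"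
        using reals_Archimedean by blast
      obtain r where "\<forall>k. \<bar>birkhoff_sum T g k x - real k * ?I\<bar> \<le> real k * inverse (real (Suc j)) + r"
        using elim by blast
      moreover have "real k * inverse (real (Suc j)) \<le> real k * e" for k
        using j by (intro mult_left_mono) auto
      ultimately show "\<exists>r. \<forall>k. \<bar>birkhoff_sum T g k x - real k * ?I\<bar> \<le> real k * e + r"
        by (meson order_trans add_right_mono)
    qed
  qed
qed

definition injections :: "nat \<Rightarrow> nat \<Rightarrow> (nat \<Rightarrow> nat) set" where
  "injections m n = {\<tau>. \<tau> \<in> {..<m} \<rightarrow>\<^sub>E {..<n} \<and> inj_on \<tau> {..<m}}"

lemma per_eq_sum_injections: "per m n A = (\<Sum>\<tau>\<in>injections m n. \<Prod>i<m. A i (\<tau> i))"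
  unfolding per_def injections_def ..

lemma finite_injections: "finite (injections m n)"
  by (rule finite_subset[of _ "{..<m} \<rightarrow>\<^sub>E {..<n}"]) (auto simp: injections_def intro: finite_PiE)

lemma injections_less: "\<tau> \<in> injections m n \<Longrightarrow> i < m \<Longrightarrow> \<tau> i < n"
  unfolding injections_def by auto

lemma per_0: "per 0 n A = 1"
proof -
  have "injections 0 n = {\<lambda>_. undefined}"
    unfolding injections_def by auto
  then show ?thesis
    by (simp add: per_eq_sum_injections)
qed

lemma bij_betw_injections_Suc:
  "bij_betw (\<lambda>(\<tau>, j). \<tau>(m := j)) (SIGMA \<tau>:injections m n. {..<n} - \<tau> ` {..<m}) (injections (Suc m) n)"
proof (rule bij_betw_byWitness[where f' = "\<lambda>\<sigma>. (\<sigma>(m := undefined), \<sigma> m)"])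
  show "\<forall>p \<in> (SIGMA \<tau>:injections m n. {..<n} - \<tau> ` {..<m}). (\<lambda>\<sigma>. (\<sigma>(m := undefined), \<sigma> m)) ((\<lambda>(\<tau>, j). \<tau>(m := j)) p) = p"
  proof
    fix p assume "p \<in> (SIGMA \<tau>:injections m n. {..<n} - \<tau> ` {..<m})"
    then obtain \<tau> j where p: "p = (\<tau>, j)" and "\<tau> \<in> injections m n"
      by blast
    then have "\<tau> m = undefined"
      unfolding injections_def using PiE_arb[of \<tau> "{..<m}" "\<lambda>_. {..<n}" m] by simp
    then show "(\<lambda>\<sigma>. (\<sigma>(m := undefined), \<sigma> m)) ((\<lambda>(\<tau>, j). \<tau>(m := j)) p) = p"
      by (simp add: p fun_upd_idem)
  qed
  show "\<forall>\<sigma> \<in> injections (Suc m) n. (\<lambda>(\<tau>, j). \<tau>(m := j)) ((\<lambda>\<sigma>. (\<sigma>(m := undefined), \<sigma> m)) \<sigma>) = \<sigma>"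
    by auto
  show "(\<lambda>(\<tau>, j). \<tau>(m := j)) ` (SIGMA \<tau>:injections m n. {..<n} - \<tau> ` {..<m}) \<subseteq> injections (Suc m) n"
    by (auto simp: injections_def lessThan_Suc PiE_iff inj_on_fun_updI)
  show "(\<lambda>\<sigma>. (\<sigma>(m := undefined), \<sigma> m)) ` injections (Suc m) n \<subseteq> (SIGMA \<tau>:injections m n. {..<n} - \<tau> ` {..<m})"
    by (auto simp: injections_def lessThan_Suc PiE_iff inj_on_def)
qed

lemma per_Suc:
  "per (Suc m) n A = (\<Sum>\<tau>\<in>injections m n. (\<Prod>i<m. A i (\<tau> i)) * (\<Sum>j\<in>{..<n} - \<tau> ` {..<m}. A m j))"
proof -
  have "per (Suc m) n A = (\<Sum>\<sigma>\<in>injections (Suc m) n. \<Prod>i<Suc m. A i (\<sigma> i))"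
    by (rule per_eq_sum_injections)
  also have "\<dots> = (\<Sum>p\<in>(SIGMA \<tau>:injections m n. {..<n} - \<tau> ` {..<m}). \<Prod>i<Suc m. A i (((\<lambda>(\<tau>, j). \<tau>(m := j)) p) i))"
    by (rule sum.reindex_bij_betw[OF bij_betw_injections_Suc, symmetric])
  also have "\<dots> = (\<Sum>(\<tau>, j)\<in>(SIGMA \<tau>:injections m n. {..<n} - \<tau> ` {..<m}). \<Prod>i<Suc m. A i ((\<tau>(m := j)) i))"
    by (rule sum.cong[OF refl]) (simp add: split_beta)
  also have "\<dots> = (\<Sum>\<tau>\<in>injections m n. \<Sum>j\<in>{..<n} - \<tau> ` {..<m}. \<Prod>i<Suc m. A i ((\<tau>(m := j)) i))"
    by (rule sum.Sigma[symmetric]) (simp_all add: finite_injections)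
  also have "\<dots> = (\<Sum>\<tau>\<in>injections m n. \<Sum>j\<in>{..<n} - \<tau> ` {..<m}. (\<Prod>i<m. A i (\<tau> i)) * A m j)"
    by (intro sum.cong refl) (simp add: prod.lessThan_Suc)
  finally show ?thesis
    by (simp add: sum_distrib_left)
qed

lemma per_abs_le_prod_sum: "per m n (\<lambda>i j. \<bar>A i j\<bar>) \<le> (\<Prod>i<m. \<Sum>j<n. \<bar>A i j\<bar>)"
proof (induction m)
  case 0
  then show ?case by (simp add: per_0)
next
  case (Suc m)
  have "per (Suc m) n (\<lambda>i j. \<bar>A i j\<bar>)
      = (\<Sum>\<tau>\<in>injections m n. (\<Prod>i<m. \<bar>A i (\<tau> i)\<bar>) * (\<Sum>j\<in>{..<n} - \<tau> ` {..<m}. \<bar>A m j\<bar>))"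
    by (rule per_Suc)
  also have "\<dots> \<le> (\<Sum>\<tau>\<in>injections m n. (\<Prod>i<m. \<bar>A i (\<tau> i)\<bar>) * (\<Sum>j<n. \<bar>A m j\<bar>))"
    by (intro sum_mono mult_left_mono sum_mono2) (auto intro: prod_nonneg)
  also have "\<dots> = per m n (\<lambda>i j. \<bar>A i j\<bar>) * (\<Sum>j<n. \<bar>A m j\<bar>)"
    by (simp add: per_eq_sum_injections sum_distrib_right)
  also have "\<dots> \<le> (\<Prod>i<m. \<Sum>j<n. \<bar>A i j\<bar>) * (\<Sum>j<n. \<bar>A m j\<bar>)"
    by (intro mult_right_mono Suc) (auto intro: sum_nonneg)
  finally show ?case
    by simp
qed

lemma per_Suc_approx:
  assumes K: "\<And>j. j < n \<Longrightarrow> \<bar>A m j\<bar> \<le> K"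
  shows "\<bar>per (Suc m) n A - per m n A * (\<Sum>j<n. A m j)\<bar> \<le> real m * K * per m n (\<lambda>i j. \<bar>A i j\<bar>)"
proof -
  define taken where "taken \<tau> = (\<Sum>j\<in>\<tau> ` {..<m}. A m j)" for \<tau>
  have rest: "(\<Sum>j\<in>{..<n} - \<tau> ` {..<m}. A m j) = (\<Sum>j<n. A m j) - taken \<tau>"
    if "\<tau> \<in> injections m n" for \<tau>
    unfolding taken_def using injections_less[OF that] by (intro sum_diff) auto
  have taken_bound: "\<bar>taken \<tau>\<bar> \<le> real m * K" if \<tau>: "\<tau> \<in> injections m n" for \<tau>
  proof -
    have "\<bar>taken \<tau>\<bar> \<le> (\<Sum>j\<in>\<tau> ` {..<m}. \<bar>A m j\<bar>)"
      unfolding taken_def by (rule sum_abs)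
    also have "\<dots> \<le> real (card (\<tau> ` {..<m})) * K"
      using K injections_less[OF \<tau>] by (intro sum_bounded_above) auto
    also have "\<dots> \<le> real m * K"
      using card_image_le[of "{..<m}" \<tau>] K[of 0] injections_less[OF \<tau>, of 0]
      by (cases m) (auto intro!: mult_right_mono)
    finally show ?thesis .
  qed
  have "per (Suc m) n A - per m n A * (\<Sum>j<n. A m j) = (\<Sum>\<tau>\<in>injections m n.
      (\<Prod>i<m. A i (\<tau> i)) * (\<Sum>j\<in>{..<n} - \<tau> ` {..<m}. A m j) - (\<Prod>i<m. A i (\<tau> i)) * (\<Sum>j<n. A m j))"
    by (simp only: per_Suc per_eq_sum_injections[of m n A] sum_distrib_right sum_subtractf)
  also have "\<dots> = (\<Sum>\<tau>\<in>injections m n. (\<Prod>i<m. A i (\<tau> i)) * - taken \<tau>)"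
    by (intro sum.cong refl) (simp add: rest algebra_simps)
  also have "\<bar>\<dots>\<bar> \<le> (\<Sum>\<tau>\<in>injections m n. (\<Prod>i<m. \<bar>A i (\<tau> i)\<bar>) * (real m * K))"
    by (rule order_trans[OF sum_abs sum_mono])
      (auto simp: abs_mult abs_prod intro!: mult_left_mono taken_bound prod_nonneg)
  also have "\<dots> = real m * K * per m n (\<lambda>i j. \<bar>A i j\<bar>)"
    by (simp add: per_eq_sum_injections sum_distrib_left mult.commute)
  finally show ?thesis .
qed

definition max_abs_prefix :: "(nat \<Rightarrow> real) \<Rightarrow> nat \<Rightarrow> real" where
  "max_abs_prefix x n = Max (insert 0 ((\<lambda>j. \<bar>x j\<bar>) ` {..<n}))"

lemma abs_le_max_abs_prefix: "j < n \<Longrightarrow> \<bar>x j\<bar> \<le> max_abs_prefix x n"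
  unfolding max_abs_prefix_def by (rule Max_ge) auto

lemma max_abs_prefix_nonneg: "0 \<le> max_abs_prefix x n"
  unfolding max_abs_prefix_def by (rule Max_ge) auto

lemma max_abs_prefix_le_linear:
  assumes "0 \<le> e" and bound: "\<And>j. N \<le> j \<Longrightarrow> \<bar>x j\<bar> \<le> e * real (Suc j)"
  shows "max_abs_prefix x n \<le> max_abs_prefix x N + e * real n"
  unfolding max_abs_prefix_def[of x n]
proof (rule Max.boundedI)
  fix a assume "a \<in> insert 0 ((\<lambda>j. \<bar>x j\<bar>) ` {..<n})"
  then consider "a = 0" | j where "j < n" "a = \<bar>x j\<bar>"
    by auto
  then show "a \<le> max_abs_prefix x N + e * real n"
  proof cases
    case 1
    then show ?thesis
      using max_abs_prefix_nonneg[of x N] \<open>0 \<le> e\<close> by simp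
  next
    case (2 j)
    show ?thesis
    proof (cases "j < N")
      case True
      then show ?thesis
        using 2 abs_le_max_abs_prefix[of j N x] mult_nonneg_nonneg[OF \<open>0 \<le> e\<close> of_nat_0_le_iff[of n]]
        by linarith
    next
      case False
      have "e * real (Suc j) \<le> e * real n"
        using 2 \<open>0 \<le> e\<close> by (intro mult_left_mono) auto
      then have "a \<le> e * real n"
        using 2 bound[of j] False by simp
      then show ?thesis
        using max_abs_prefix_nonneg[of x N] by simp
    qed
  qed
qed auto

lemma max_abs_prefix_div_tendsto_0:
  assumes "(\<lambda>n. x n / real (Suc n)) \<longlonglongrightarrow> 0"
  shows "(\<lambda>n. max_abs_prefix x n / real n) \<longlonglongrightarrow> 0"
proof (rule LIMSEQ_I)
  fix e :: real
  assume e: "0 < e"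
  then obtain N where N: "\<And>j. N \<le> j \<Longrightarrow> \<bar>x j\<bar> / real (Suc j) < e / 2"
    using LIMSEQ_D[OF assms, of "e / 2"] by auto
  have "\<bar>x j\<bar> \<le> e / 2 * real (Suc j)" if "N \<le> j" for j
    using N[OF that] by (simp add: field_simps)
  then have bound: "max_abs_prefix x n \<le> max_abs_prefix x N + e / 2 * real n" for n
    using e by (intro max_abs_prefix_le_linear) auto
  obtain N' where N': "max_abs_prefix x N / (e / 2) < real N'"
    using reals_Archimedean2 by blast
  have "norm (max_abs_prefix x n / real n - 0) < e" if n: "Suc N' \<le> n" for n
  proof -
    have n_pos: "0 < real n"
      using n by simp
    have "max_abs_prefix x N < real N' * (e / 2)"
      using N' e by (simp add: pos_divide_less_eq)
    also have "\<dots> \<le> real n * (e / 2)"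
      using n e by (intro mult_right_mono) auto
    finally have "max_abs_prefix x n < real n * (e / 2) + real n * (e / 2)"
      using bound[of n] mult.commute[of "e / 2" "real n"] by linarith
    then have "max_abs_prefix x n < real n * e"
      by (simp add: field_simps)
    then have "max_abs_prefix x n / real n < e"
      using n_pos by (simp add: pos_divide_less_eq mult.commute)
    then show ?thesis
      using max_abs_prefix_nonneg[of x n] by simp
  qed
  then show "\<exists>N. \<forall>n\<ge>N. norm (max_abs_prefix x n / real n - 0) < e"
    by blast
qed

lemma term_div_Suc_tendsto_0_of_averages:
  fixes a :: "nat \<Rightarrow> real"
  assumes avg: "(\<lambda>n. (\<Sum>j<n. a j) / real n) \<longlonglongrightarrow> c"
  shows "(\<lambda>n. a n / real (Suc n)) \<longlonglongrightarrow> 0"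
proof -
  have "(\<lambda>n. (\<Sum>j<Suc n. a j) / real (Suc n) - (\<Sum>j<n. a j) / real n * (real n / real (Suc n)))
      \<longlonglongrightarrow> c - c * 1"
    by (intro tendsto_diff tendsto_mult LIMSEQ_Suc[OF avg] avg LIMSEQ_n_over_Suc_n)
  moreover have "(\<Sum>j<Suc n. a j) / real (Suc n) - (\<Sum>j<n. a j) / real n * (real n / real (Suc n))
      = a n / real (Suc n)" for n
  proof (cases "n = 0")
    case False
    then have "(\<Sum>j<n. a j) / real n * (real n / real (Suc n)) = (\<Sum>j<n. a j) / real (Suc n)"
      by simp
    then show ?thesis
      by (simp add: diff_divide_distrib[symmetric])
  qed simp
  ultimately show ?thesis
    by simp
qed

lemma per_div_power_tendsto:
  fixes A :: "nat \<Rightarrow> nat \<Rightarrow> real"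
  assumes avg: "\<And>i. i < m \<Longrightarrow> (\<lambda>n. (\<Sum>j<n. A i j) / real n) \<longlonglongrightarrow> c i"
    and abs_avg: "\<And>i. i < m \<Longrightarrow> (\<lambda>n. (\<Sum>j<n. \<bar>A i j\<bar>) / real n) \<longlonglongrightarrow> d i"
    and max_avg: "\<And>i. i < m \<Longrightarrow> (\<lambda>n. max_abs_prefix (A i) n / real n) \<longlonglongrightarrow> 0"
  shows "(\<lambda>n. per m n A / real n ^ m) \<longlonglongrightarrow> (\<Prod>i<m. c i)"
  using assms
proof (induction m)
  case 0
  then show ?case by (simp add: per_0)
next
  case (Suc m)
  define err where "err n = per (Suc m) n A - per m n A * (\<Sum>j<n. A m j)" for n
  have split: "per (Suc m) n A / real n ^ Suc m =
      per m n A / real n ^ m * ((\<Sum>j<n. A m j) / real n) + err n / real n ^ Suc m" for n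
    by (cases "n = 0") (simp_all add: err_def field_simps)
  have "(\<lambda>n. per m n A / real n ^ m) \<longlonglongrightarrow> (\<Prod>i<m. c i)"
    using Suc.prems by (intro Suc.IH) auto
  from tendsto_mult[OF this Suc.prems(1)]
  have main: "(\<lambda>n. per m n A / real n ^ m * ((\<Sum>j<n. A m j) / real n)) \<longlonglongrightarrow> (\<Prod>i<m. c i) * c m"
    by simp
  define bound where
    "bound n = real m * (max_abs_prefix (A m) n / real n) * (\<Prod>i<m. (\<Sum>j<n. \<bar>A i j\<bar>) / real n)" for n
  have "bound \<longlonglongrightarrow> real m * 0 * (\<Prod>i<m. d i)"
    unfolding bound_def using Suc.prems by (intro tendsto_mult tendsto_const tendsto_prod) auto
  then have bound_lim: "bound \<longlonglongrightarrow> 0"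
    by simp
  have err_bound: "norm (err n / real n ^ Suc m) \<le> bound n" for n
  proof -
    have "\<bar>err n\<bar> \<le> real m * max_abs_prefix (A m) n * per m n (\<lambda>i j. \<bar>A i j\<bar>)"
      unfolding err_def by (rule per_Suc_approx) (rule abs_le_max_abs_prefix)
    also have "\<dots> \<le> real m * max_abs_prefix (A m) n * (\<Prod>i<m. \<Sum>j<n. \<bar>A i j\<bar>)"
      by (intro mult_left_mono per_abs_le_prod_sum) (simp add: max_abs_prefix_nonneg)
    finally have "\<bar>err n\<bar> / real n ^ Suc m
        \<le> real m * max_abs_prefix (A m) n * (\<Prod>i<m. \<Sum>j<n. \<bar>A i j\<bar>) / real n ^ Suc m"
      by (rule divide_right_mono) simp
    also have "\<dots> = bound n"
      unfolding bound_def prod_dividef by (simp add: field_simps)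
    finally show ?thesis
      by (simp add: abs_divide)
  qed
  have "(\<lambda>n. err n / real n ^ Suc m) \<longlonglongrightarrow> 0"
    using err_bound by (intro Lim_null_comparison[OF always_eventually bound_lim]) simp
  from tendsto_add[OF main this] show ?case
    unfolding split by simp
qed

lemma power_div_falling_pow_tendsto_1: "(\<lambda>n. real n ^ m / real (falling_pow n m)) \<longlonglongrightarrow> 1"
proof -
  have factor: "(\<lambda>n. real (n - k) / real n) \<longlonglongrightarrow> 1" for k
  proof -
    have "(\<lambda>n. 1 - real k * inverse (real n)) \<longlonglongrightarrow> 1 - real k * 0"
      by (intro tendsto_diff tendsto_mult tendsto_const lim_inverse_n)
    moreover have "\<forall>\<^sub>F n in sequentially. 1 - real k * inverse (real n) = real (n - k) / real n"
      using eventually_ge_at_top[of "Suc k"] by eventually_elim (simp add: of_nat_diff field_simps)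
    ultimately show ?thesis
      using Lim_transform_eventually by fastforce
  qed
  have "(\<lambda>n. \<Prod>k<m. real (n - k) / real n) \<longlonglongrightarrow> (\<Prod>k<m. 1)"
    by (intro tendsto_prod factor)
  moreover have "(\<Prod>k<m. real (n - k) / real n) = real (falling_pow n m) / real n ^ m" for n
    unfolding prod_dividef falling_pow_def by simp
  ultimately show ?thesis
    using tendsto_inverse[of "\<lambda>n. real (falling_pow n m) / real n ^ m" 1] by simp
qed

lemma per_div_falling_pow_tendsto:
  fixes A :: "nat \<Rightarrow> nat \<Rightarrow> real"
  assumes avg: "\<And>i. i < m \<Longrightarrow> (\<lambda>n. (\<Sum>j<n. A i j) / real n) \<longlonglongrightarrow> c i"
    and abs_avg: "\<And>i. i < m \<Longrightarrow> (\<lambda>n. (\<Sum>j<n. \<bar>A i j\<bar>) / real n) \<longlonglongrightarrow> d i"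
  shows "(\<lambda>n. per m n A / real (falling_pow n m)) \<longlonglongrightarrow> (\<Prod>i<m. c i)"
proof -
  have "(\<lambda>n. max_abs_prefix (A i) n / real n) \<longlonglongrightarrow> 0" if "i < m" for i
    using avg[OF that] by (intro max_abs_prefix_div_tendsto_0 term_div_Suc_tendsto_0_of_averages)
  then have "(\<lambda>n. per m n A / real n ^ m * (real n ^ m / real (falling_pow n m))) \<longlonglongrightarrow> (\<Prod>i<m. c i) * 1"
    using assms by (intro tendsto_mult per_div_power_tendsto power_div_falling_pow_tendsto_1)
  moreover have "\<forall>\<^sub>F n in sequentially.
      per m n A / real n ^ m * (real n ^ m / real (falling_pow n m)) = per m n A / real (falling_pow n m)"
    using eventually_gt_at_top[of 0] by eventually_elim simp
  ultimately show ?thesis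
    using Lim_transform_eventually by fastforce
qed

theorem theorem1p1:
  fixes M :: "'a measure" and T :: "'a \<Rightarrow> 'a" and m :: nat and f :: "nat \<Rightarrow> 'a \<Rightarrow> real"
  assumes "prob_space M"
    and "ergodic M T"
    and "m \<ge> 1"
    and "\<And>i. i < m \<Longrightarrow> integrable M (f i)"
  shows "AE \<omega> in M. (\<lambda>n. per m n (\<lambda>i j. f i ((T ^^ j) \<omega>)) / real (falling_pow n m))
            \<longlonglongrightarrow> (\<Prod>i<m. integral\<^sup>L M (f i))"
proof -
  have "AE x in M. \<forall>i\<in>{..<m}.
      (\<lambda>n. birkhoff_sum T (f i) n x / real n) \<longlonglongrightarrow> integral\<^sup>L M (f i) \<and>
      (\<lambda>n. birkhoff_sum T (\<lambda>y. \<bar>f i y\<bar>) n x / real n) \<longlonglongrightarrow> (\<integral>y. \<bar>f i y\<bar> \<partial>M)"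
    using assms(1,2,4) by (intro AE_finite_allI AE_conjI birkhoff_ergodic_theorem) auto
  then show ?thesis
  proof eventually_elim
    case (elim x)
    then show ?case
      unfolding birkhoff_sum_def by (intro per_div_falling_pow_tendsto) auto
  qed
qed

end
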